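(* For every integer $n\geq 1$, $$c_n(231,132 : 231)=c_n(312,213 : 312)=\begin{cases}k^2+1 & \text{if } n=2k,\\ k^2+k+1 & \text{if } n=2k+1.\end{cases}$$
   Context: $S_n$ is the symmetric group on $[n]=\{1,\dots,n\}$, and a permutation $\pi\in S_n$ is written in one-line notation $\pi=\pi_1\pi_2\cdots\pi_n$ with $\pi_i=\pi(i)$. For $\tau\in S_k$, $k\le n$, $\pi$ contains $\tau$ if there are indices $i_1<\dots<i_k$ with $\pi_{i_s}>\pi_{i_t}$ iff $\tau_s>\tau_t$ for all $1\le s<t\le k$; otherwise $\pi$ avoids $\tau$. $\pi^2$ denotes the composition $\pi\circ\pi$. For patterns $\sigma_1,\sigma_2,\rho$, $c_n(\sigma_1,\sigma_2 : \rho)$ denotes the number of permutations $\pi\in S_n$ such that $\pi$ avoids both $\sigma_1$ and $\sigma_2$ and $\pi^2$ avoids $\rho$. *)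

theory Defs
  imports "HOL-Combinatorics.Permutations"
begin

text \<open>A pattern \<tau> \<in> S_k is given in
  one-line notation as a list of length k (e.g. 231 = [2,3,1]).\<close>

definition contains :: "(nat \<Rightarrow> nat) \<Rightarrow> nat \<Rightarrow> nat list \<Rightarrow> bool" where
  "contains \<pi> n \<tau> \<longleftrightarrow> length \<tau> \<le> n \<and>
     (\<exists>i :: nat \<Rightarrow> nat.
        (\<forall>s t. 1 \<le> s \<and> s < t \<and> t \<le> length \<tau> \<longrightarrow> i s < i t) \<and>
        (\<forall>s. 1 \<le> s \<and> s \<le> length \<tau> \<longrightarrow> 1 \<le> i s \<and> i s \<le> n) \<and>
        (\<forall>s t. 1 \<le> s \<and> s < t \<and> t \<le> length \<tau> \<longrightarrow>
           (\<pi> (i s) > \<pi> (i t) \<longleftrightarrow> \<tau> ! (s - 1) > \<tau> ! (t - 1))))"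

definition avoids :: "(nat \<Rightarrow> nat) \<Rightarrow> nat \<Rightarrow> nat list \<Rightarrow> bool" where
  "avoids \<pi> n \<tau> \<longleftrightarrow> \<not> contains \<pi> n \<tau>"

definition cnt :: "nat \<Rightarrow> nat list \<Rightarrow> nat list \<Rightarrow> nat list \<Rightarrow> nat" where
  "cnt n \<sigma>1 \<sigma>2 \<rho> = card {\<pi>. \<pi> permutes {1..n} \<and> avoids \<pi> n \<sigma>1 \<and> avoids \<pi> n \<sigma>2
                              \<and> avoids (\<pi> \<circ> \<pi>) n \<rho>}"

end

theory Submission
  imports Defs
begin

(* Reversing positions and complementing values, pi |-> w o pi o w with w i = n + 1 - i,
   commutes with squaring and turns the patterns 231 and 132 into 312 and 213, which gives the
   first equality.  A permutation avoiding 312 and 213 has no valley, so it increases up to the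
   position m of n and decreases afterwards.  If pi is not the identity and l is its least moved
   point, then pi n = l, hence pi^2 m = l, and 312-avoidance of pi^2 puts its values on [l, m)
   below its values on (m, n].  Two counting arguments then give pi l = n + l - m, so pi is
   1 ... l-1, n-m+l ... n, n-m+l-1 ... l in one-line notation, determined by the pair
   (a, m) = (l - 1, m) with a < m and 2m <= n + a.  There are floor(n/2) * ceil(n/2) such pairs,
   and the identity adds one. *)

lemma contains_length3:
  "contains \<pi> n [a, b, c] \<longleftrightarrow> (\<exists>x y z. 1 \<le> x \<and> x < y \<and> y < z \<and> z \<le> n \<and>
     (\<pi> x > \<pi> y \<longleftrightarrow> a > b) \<and> (\<pi> x > \<pi> z \<longleftrightarrow> a > c) \<and> (\<pi> y > \<pi> z \<longleftrightarrow> b > c))"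
  (is "?lhs \<longleftrightarrow> ?rhs")
proof
  assume ?lhs
  then obtain i where
    mono: "\<forall>s t. 1 \<le> s \<and> s < t \<and> t \<le> length [a, b, c] \<longrightarrow> i s < i t" and
    range: "\<forall>s. 1 \<le> s \<and> s \<le> length [a, b, c] \<longrightarrow> 1 \<le> i s \<and> i s \<le> n" and
    order: "\<forall>s t. 1 \<le> s \<and> s < t \<and> t \<le> length [a, b, c] \<longrightarrow>
      (\<pi> (i s) > \<pi> (i t) \<longleftrightarrow> [a, b, c] ! (s - 1) > [a, b, c] ! (t - 1))"
    unfolding contains_def by (elim conjE exE)
  show ?rhs
    using mono[rule_format, of 1 2] mono[rule_format, of 2 3] range[rule_format, of 1]
      range[rule_format, of 3] order[rule_format, of 1 2] order[rule_format, of 1 3]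
      order[rule_format, of 2 3]
    by (intro exI[of _ "i 1"] exI[of _ "i 2"] exI[of _ "i 3"]) simp
next
  assume ?rhs
  then obtain x y z where "1 \<le> x" "x < y" "y < z" "z \<le> n"
    "\<pi> x > \<pi> y \<longleftrightarrow> a > b" "\<pi> x > \<pi> z \<longleftrightarrow> a > c" "\<pi> y > \<pi> z \<longleftrightarrow> b > c"
    by blast
  moreover have "1 \<le> s \<and> s < t \<and> t \<le> length [a, b, c] \<longleftrightarrow>
      (s = 1 \<and> t = 2) \<or> (s = 1 \<and> t = 3) \<or> (s = 2 \<and> t = 3)" for s t :: nat
    by auto
  moreover have "1 \<le> s \<and> s \<le> length [a, b, c] \<longleftrightarrow> s = 1 \<or> s = 2 \<or> s = 3" for s :: nat
    by auto
  ultimately show ?lhs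
    unfolding contains_def
    by (intro conjI exI[of _ "\<lambda>s. if s = 1 then x else if s = 2 then y else z"]) auto
qed

lemma avoids_312_213_iff:
  "avoids \<pi> n [3, 1, 2] \<and> avoids \<pi> n [2, 1, 3] \<longleftrightarrow>
    (\<forall>x y z. 1 \<le> x \<longrightarrow> x < y \<longrightarrow> y < z \<longrightarrow> z \<le> n \<longrightarrow> \<not> (\<pi> y < \<pi> x \<and> \<pi> y \<le> \<pi> z))"
proof -
  have "contains \<pi> n [3, 1, 2] \<or> contains \<pi> n [2, 1, 3] \<longleftrightarrow>
    (\<exists>x y z. 1 \<le> x \<and> x < y \<and> y < z \<and> z \<le> n \<and> \<pi> y < \<pi> x \<and> \<pi> y \<le> \<pi> z)"
    unfolding contains_length3 by (auto simp: not_less) (metis not_less)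
  then show ?thesis by (auto simp: avoids_def)
qed

lemma avoids_312_iff:
  "avoids \<sigma> n [3, 1, 2] \<longleftrightarrow>
    (\<forall>x y z. 1 \<le> x \<longrightarrow> x < y \<longrightarrow> y < z \<longrightarrow> z \<le> n \<longrightarrow> \<not> (\<sigma> y \<le> \<sigma> z \<and> \<sigma> z < \<sigma> x))"
proof -
  have "contains \<sigma> n [3, 1, 2] \<longleftrightarrow>
    (\<exists>x y z. 1 \<le> x \<and> x < y \<and> y < z \<and> z \<le> n \<and> \<sigma> y \<le> \<sigma> z \<and> \<sigma> z < \<sigma> x)"
    unfolding contains_length3 by (auto simp: not_less intro: le_less_trans)
  then show ?thesis by (auto simp: avoids_def)
qed

definition mirror :: "nat \<Rightarrow> nat \<Rightarrow> nat" where
  "mirror n p = (if p \<in> {1..n} then n + 1 - p else p)"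

definition rev_compl :: "nat \<Rightarrow> (nat \<Rightarrow> nat) \<Rightarrow> nat \<Rightarrow> nat" where
  "rev_compl n \<pi> = mirror n \<circ> \<pi> \<circ> mirror n"

definition pattern_rev_compl :: "nat list \<Rightarrow> nat list" where
  "pattern_rev_compl \<tau> = map (\<lambda>x. length \<tau> + 1 - x) (rev \<tau>)"

lemma mirror_mirror [simp]: "mirror n (mirror n p) = p"
  by (auto simp: mirror_def)

lemma mirror_permutes: "mirror n permutes {1..n}"
  by (rule inj_imp_permutes) (auto simp: mirror_def inj_on_def)

lemma rev_compl_permutes: "\<pi> permutes {1..n} \<Longrightarrow> rev_compl n \<pi> permutes {1..n}"
  unfolding rev_compl_def by (intro permutes_compose mirror_permutes)

lemma rev_compl_rev_compl [simp]: "rev_compl n (rev_compl n \<pi>) = \<pi>"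
  by (simp add: rev_compl_def fun_eq_iff)

lemma rev_compl_square: "rev_compl n \<pi> \<circ> rev_compl n \<pi> = rev_compl n (\<pi> \<circ> \<pi>)"
  by (simp add: rev_compl_def fun_eq_iff)

lemma rev_compl_apply:
  assumes "\<pi> permutes {1..n}" "p \<in> {1..n}"
  shows "rev_compl n \<pi> (n + 1 - p) + \<pi> p = n + 1"
proof -
  have "\<pi> p \<in> {1..n}" by (simp only: permutes_in_image[OF assms(1)] assms(2))
  then show ?thesis using assms(2) by (auto simp: rev_compl_def mirror_def)
qed

lemma length_pattern_rev_compl [simp]: "length (pattern_rev_compl \<tau>) = length \<tau>"
  by (simp add: pattern_rev_compl_def)

lemma pattern_rev_compl_bounded:
  "\<forall>x\<in>set (pattern_rev_compl \<tau>). x \<le> length (pattern_rev_compl \<tau>) + 1"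
  by (auto simp: pattern_rev_compl_def)

text \<open>The bound on the entries holds for every pattern in \<open>S\<^sub>k\<close>; it makes
  \<open>x \<mapsto> k + 1 - x\<close> an order-reversing involution despite truncated subtraction.\<close>

lemma pattern_rev_compl_involution:
  "\<forall>x\<in>set \<tau>. x \<le> length \<tau> + 1 \<Longrightarrow> pattern_rev_compl (pattern_rev_compl \<tau>) = \<tau>"
  by (simp add: pattern_rev_compl_def rev_map comp_def map_idI)

lemma pattern_rev_compl_nth_less_iff:
  assumes "\<forall>x\<in>set \<tau>. x \<le> length \<tau> + 1" "1 \<le> s" "s < t" "t \<le> length \<tau>"
  shows "pattern_rev_compl \<tau> ! (length \<tau> - s) < pattern_rev_compl \<tau> ! (length \<tau> - t) \<longleftrightarrow>
    \<tau> ! (t - 1) < \<tau> ! (s - 1)"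
proof -
  have "\<tau> ! (s - 1) \<le> length \<tau> + 1" "\<tau> ! (t - 1) \<le> length \<tau> + 1"
    using assms by simp_all
  moreover have "length \<tau> - Suc (length \<tau> - r) = r - 1" if "1 \<le> r" "r \<le> length \<tau>" for r
    using that by simp
  ultimately show ?thesis
    using assms(2-) by (simp add: pattern_rev_compl_def rev_nth) presburger
qed

lemma contains_rev_compl_if:
  assumes perm: "\<pi> permutes {1..n}" and bounded: "\<forall>x\<in>set \<tau>. x \<le> length \<tau> + 1"
    and "contains \<pi> n (pattern_rev_compl \<tau>)"
  shows "contains (rev_compl n \<pi>) n \<tau>"
proof -
  define k where "k = length \<tau>"
  have "k \<le> n" using assms(3) by (simp add: contains_def k_def)
  obtain i where
    mono: "\<forall>s t. 1 \<le> s \<and> s < t \<and> t \<le> k \<longrightarrow> i s < i t" and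
    range: "\<forall>s. 1 \<le> s \<and> s \<le> k \<longrightarrow> 1 \<le> i s \<and> i s \<le> n" and
    order: "\<forall>s t. 1 \<le> s \<and> s < t \<and> t \<le> k \<longrightarrow>
      (\<pi> (i s) > \<pi> (i t) \<longleftrightarrow> pattern_rev_compl \<tau> ! (s - 1) > pattern_rev_compl \<tau> ! (t - 1))"
    using assms(3) unfolding contains_def length_pattern_rev_compl k_def[symmetric] by (elim conjE exE)
  have range_rev: "1 \<le> i (k + 1 - r) \<and> i (k + 1 - r) \<le> n" if "1 \<le> r" "r \<le> k" for r
    using that by (intro range[rule_format]) auto
  define j where "j s = n + 1 - i (k + 1 - s)" for s
  have "j s < j t" if "1 \<le> s" "s < t" "t \<le> k" for s t
  proof -
    have "i (k + 1 - t) < i (k + 1 - s)" using that by (intro mono[rule_format]) auto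
    moreover have "i (k + 1 - s) \<le> n" using range_rev[of s] that by simp
    ultimately show ?thesis by (simp add: j_def)
  qed
  moreover have "1 \<le> j s \<and> j s \<le> n" if "1 \<le> s" "s \<le> k" for s
    using range_rev[of s] that by (auto simp: j_def)
  moreover have "rev_compl n \<pi> (j s) > rev_compl n \<pi> (j t) \<longleftrightarrow> \<tau> ! (s - 1) > \<tau> ! (t - 1)"
    if "1 \<le> s" "s < t" "t \<le> k" for s t
  proof -
    have image: "rev_compl n \<pi> (j r) + \<pi> (i (k + 1 - r)) = n + 1" if "1 \<le> r" "r \<le> k" for r
      using rev_compl_apply[OF perm, of "i (k + 1 - r)"] range_rev[OF that] by (simp add: j_def)
    have "rev_compl n \<pi> (j s) > rev_compl n \<pi> (j t) \<longleftrightarrow> \<pi> (i (k + 1 - t)) > \<pi> (i (k + 1 - s))"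
      using image[of s] image[of t] that by linarith
    also have "\<dots> \<longleftrightarrow> pattern_rev_compl \<tau> ! (k - t) > pattern_rev_compl \<tau> ! (k - s)"
    proof -
      have "1 \<le> k + 1 - t \<and> k + 1 - t < k + 1 - s \<and> k + 1 - s \<le> k" using that by auto
      from order[rule_format, OF this] show ?thesis using that by simp
    qed
    also have "\<dots> \<longleftrightarrow> \<tau> ! (s - 1) > \<tau> ! (t - 1)"
      using pattern_rev_compl_nth_less_iff[OF bounded, of s t] that by (simp add: k_def)
    finally show ?thesis .
  qed
  ultimately show ?thesis
    unfolding contains_def k_def[symmetric] using \<open>k \<le> n\<close> by (intro conjI exI[of _ j] allI impI) auto
qed

lemma contains_rev_compl_iff:
  assumes perm: "\<pi> permutes {1..n}" and bounded: "\<forall>x\<in>set \<tau>. x \<le> length \<tau> + 1"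
  shows "contains (rev_compl n \<pi>) n \<tau> \<longleftrightarrow> contains \<pi> n (pattern_rev_compl \<tau>)"
proof
  assume "contains (rev_compl n \<pi>) n \<tau>"
  then have "contains (rev_compl n \<pi>) n (pattern_rev_compl (pattern_rev_compl \<tau>))"
    using pattern_rev_compl_involution[OF bounded] by simp
  with contains_rev_compl_if[OF rev_compl_permutes[OF perm] pattern_rev_compl_bounded]
  have "contains (rev_compl n (rev_compl n \<pi>)) n (pattern_rev_compl \<tau>)" .
  then show "contains \<pi> n (pattern_rev_compl \<tau>)" by simp
qed (rule contains_rev_compl_if[OF assms])

lemma rev_compl_permutes_iff: "rev_compl n \<pi> permutes {1..n} \<longleftrightarrow> \<pi> permutes {1..n}"
  by (metis rev_compl_permutes rev_compl_rev_compl)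

lemma cnt_rev_compl:
  assumes "\<forall>x\<in>set \<sigma>1. x \<le> length \<sigma>1 + 1" "\<forall>x\<in>set \<sigma>2. x \<le> length \<sigma>2 + 1"
    "\<forall>x\<in>set \<rho>. x \<le> length \<rho> + 1"
  shows "cnt n \<sigma>1 \<sigma>2 \<rho> = cnt n (pattern_rev_compl \<sigma>1) (pattern_rev_compl \<sigma>2) (pattern_rev_compl \<rho>)"
proof -
  define S where "S \<sigma>1 \<sigma>2 \<rho> =
    {\<pi>. \<pi> permutes {1..n} \<and> avoids \<pi> n \<sigma>1 \<and> avoids \<pi> n \<sigma>2 \<and> avoids (\<pi> \<circ> \<pi>) n \<rho>}"
    for \<sigma>1 \<sigma>2 \<rho>
  let ?S' = "S (pattern_rev_compl \<sigma>1) (pattern_rev_compl \<sigma>2) (pattern_rev_compl \<rho>)"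
  have membership: "rev_compl n \<pi> \<in> S \<sigma>1 \<sigma>2 \<rho> \<longleftrightarrow> \<pi> \<in> ?S'" for \<pi>
  proof (cases "\<pi> permutes {1..n}")
    case True
    have square: "\<pi> \<circ> \<pi> permutes {1..n}" by (rule permutes_compose[OF True True])
    show ?thesis
      unfolding S_def mem_Collect_eq avoids_def rev_compl_square rev_compl_permutes_iff
        contains_rev_compl_iff[OF True assms(1)] contains_rev_compl_iff[OF True assms(2)]
        contains_rev_compl_iff[OF square assms(3)] ..
  qed (unfold S_def mem_Collect_eq rev_compl_permutes_iff, blast)
  have "S \<sigma>1 \<sigma>2 \<rho> = rev_compl n ` ?S'"
  proof (intro equalityI subsetI)
    fix \<pi> assume "\<pi> \<in> S \<sigma>1 \<sigma>2 \<rho>"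
    then have "rev_compl n \<pi> \<in> ?S'" using membership[of "rev_compl n \<pi>"] by simp
    then show "\<pi> \<in> rev_compl n ` ?S'" by (metis image_eqI rev_compl_rev_compl)
  qed (use membership in auto)
  moreover have "inj (rev_compl n)"
    by (metis injI rev_compl_rev_compl)
  ultimately show ?thesis
    unfolding cnt_def S_def[symmetric] by (simp add: card_image inj_on_subset)
qed

lemma cnt_231_132_eq_cnt_312_213:
  "cnt n [2,3,1] [1,3,2] [2,3,1] = cnt n [3,1,2] [2,1,3] [3,1,2]"
proof -
  have "pattern_rev_compl [2,3,1] = [3,1,2]" "pattern_rev_compl [1,3,2] = [2,1,3]"
    by (simp_all add: pattern_rev_compl_def eval_nat_numeral)
  then show ?thesis using cnt_rev_compl[of "[2,3,1]" "[1,3,2]" "[2,3,1]" n] by simp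
qed

lemma increasing_steps_gap:
  fixes f :: "nat \<Rightarrow> nat"
  assumes "\<And>x. a \<le> x \<Longrightarrow> x < b \<Longrightarrow> f x < f (Suc x)" "a \<le> x" "x \<le> b"
  shows "f a + (x - a) \<le> f x"
  using assms(2,3)
proof (induction x rule: dec_induct)
  case (step x)
  then show ?case using assms(1)[of x] by simp
qed simp

lemma decreasing_steps_gap:
  fixes f :: "nat \<Rightarrow> nat"
  assumes "\<And>x. a \<le> x \<Longrightarrow> x < b \<Longrightarrow> f (Suc x) < f x" "a \<le> x" "x \<le> b"
  shows "f x + (x - a) \<le> f a"
  using assms(2,3)
proof (induction x rule: dec_induct)
  case (step x)
  then show ?case using assms(1)[of x] by simp
qed simp

lemma increasing_interval_tight:
  fixes f :: "nat \<Rightarrow> nat"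
  assumes "\<And>x. a \<le> x \<Longrightarrow> x < b \<Longrightarrow> f x < f (Suc x)" "f b \<le> f a + (b - a)" "a \<le> x" "x \<le> b"
  shows "f x = f a + (x - a)"
  using increasing_steps_gap[of a b f x] increasing_steps_gap[of x b f b] assms by fastforce

lemma decreasing_interval_tight:
  fixes f :: "nat \<Rightarrow> nat"
  assumes "\<And>x. a \<le> x \<Longrightarrow> x < b \<Longrightarrow> f (Suc x) < f x" "f a \<le> f b + (b - a)" "a \<le> x" "x \<le> b"
  shows "f x = f b + (b - x)"
  using decreasing_steps_gap[of a b f x] decreasing_steps_gap[of x b f b] assms by fastforce

locale valley_free_perm =
  fixes n :: nat and \<pi> :: "nat \<Rightarrow> nat" and m :: nat
  assumes perm: "\<pi> permutes {1..n}"
    and no_valley: "\<And>x y z. 1 \<le> x \<Longrightarrow> x < y \<Longrightarrow> y < z \<Longrightarrow> z \<le> n \<Longrightarrow>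
      \<pi> y < \<pi> x \<Longrightarrow> \<pi> y < \<pi> z \<Longrightarrow> False"
    and peak_pos: "1 \<le> m" "m \<le> n"
    and peak: "\<pi> m = n"
begin

lemma in_range: "1 \<le> x \<Longrightarrow> x \<le> n \<Longrightarrow> 1 \<le> \<pi> x \<and> \<pi> x \<le> n"
  using permutes_in_image[OF perm, of x] by simp

lemma perm_eq_iff [simp]: "\<pi> x = \<pi> y \<longleftrightarrow> x = y"
  using permutes_inj[OF perm] by (auto dest: injD)

lemma fixed_outside: "x < 1 \<or> n < x \<Longrightarrow> \<pi> x = x"
  using permutes_not_in[OF perm, of x] by auto

lemma exists_preimage: "1 \<le> v \<Longrightarrow> v \<le> n \<Longrightarrow> \<exists>q. 1 \<le> q \<and> q \<le> n \<and> \<pi> q = v"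
  using permutes_image[OF perm] by (metis atLeastAtMost_iff imageE)

lemma increasing: "1 \<le> x \<Longrightarrow> x < y \<Longrightarrow> y \<le> m \<Longrightarrow> \<pi> x < \<pi> y"
  using no_valley[of x y m] in_range[of x] in_range[of y] peak peak_pos perm_eq_iff[of _ m]
  by (cases "y = m") (fastforce simp: nat_less_le)+

lemma decreasing: "m \<le> x \<Longrightarrow> x < y \<Longrightarrow> y \<le> n \<Longrightarrow> \<pi> y < \<pi> x"
  using no_valley[of m x y] in_range[of x] in_range[of y] peak peak_pos perm_eq_iff[of _ m]
  by (cases "x = m") (fastforce simp: nat_less_le)+

end

definition unimodal_perm :: "nat \<Rightarrow> nat \<Rightarrow> nat \<Rightarrow> nat \<Rightarrow> nat" where
  "unimodal_perm n a m p =
    (if p \<le> a then p else if p \<le> m then p + n - m else if p \<le> n then a + n + 1 - p else p)"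

locale square_avoiding_perm = valley_free_perm +
  fixes l :: nat
  assumes square_no_312: "\<And>x y z. 1 \<le> x \<Longrightarrow> x < y \<Longrightarrow> y < z \<Longrightarrow> z \<le> n \<Longrightarrow>
      \<pi> (\<pi> y) < \<pi> (\<pi> z) \<Longrightarrow> \<pi> (\<pi> z) < \<pi> (\<pi> x) \<Longrightarrow> False"
    and fixed_below: "\<And>q. q < l \<Longrightarrow> \<pi> q = q"
    and moved: "\<pi> l \<noteq> l"
begin

lemma start_bounds: "1 \<le> l" "l \<le> n"
  using moved fixed_outside[of l] by force+

lemma at_least_start: "l \<le> q \<Longrightarrow> l \<le> \<pi> q"
  using fixed_below[of "\<pi> q"] by force

lemma start_less_start_value: "l < \<pi> l"
  using at_least_start[of l] moved by simp

lemma start_le_peak: "l \<le> m"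
  using fixed_below[of m] peak peak_pos start_bounds by force

lemma last_value: "\<pi> n = l"
proof -
  obtain q where q: "1 \<le> q" "q \<le> n" "\<pi> q = l"
    using exists_preimage start_bounds by blast
  have "l < q"
    using fixed_below[of q] q moved by (cases "q < l") (auto simp: nat_less_le)
  show ?thesis
  proof (rule ccontr)
    assume "\<pi> n \<noteq> l"
    then have "l < \<pi> n" using at_least_start[of n] start_bounds by simp
    moreover have "q < n" using q \<open>\<pi> n \<noteq> l\<close> by (auto simp: nat_less_le)
    ultimately show False
      using no_valley[of l q n] \<open>l < q\<close> q start_bounds start_less_start_value by simp
  qed
qed

lemma peak_less_last: "m < n"
  using peak last_value moved peak_pos by (auto simp: nat_less_le)

lemma square_split:
  assumes "l \<le> y" "y < m" "m < x" "x \<le> n"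
  shows "\<pi> (\<pi> y) < \<pi> (\<pi> x)"
proof -
  have square_peak: "\<pi> (\<pi> m) = l" by (simp add: peak last_value)
  have "l < \<pi> (\<pi> y)" "l < \<pi> (\<pi> x)"
    using at_least_start assms square_peak by (metis perm_eq_iff le_trans less_le nat_less_le)+
  moreover have "\<pi> (\<pi> x) \<noteq> \<pi> (\<pi> y)" using assms by simp
  moreover have "1 \<le> y" using assms start_bounds by simp
  ultimately show ?thesis
    using square_no_312[of y m x] assms square_peak by (metis linorder_neqE_nat)
qed

lemma peak_less_start_value: "m < \<pi> l"
proof (rule ccontr)
  assume "\<not> m < \<pi> l"
  then have "l < m" "\<pi> l < \<pi> (\<pi> l)"
    using start_less_start_value start_bounds increasing[of l "\<pi> l"] by simp_all
  then show False
    using square_split[of l n] peak_less_last by (simp add: last_value)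
qed

lemma start_value_upper: "\<pi> l + m \<le> n + l"
proof -
  have "{l..<\<pi> l} \<subseteq> \<pi> ` {m<..n}"
  proof
    fix v assume v: "v \<in> {l..<\<pi> l}"
    obtain q where q: "1 \<le> q" "q \<le> n" "\<pi> q = v"
      using exists_preimage[of v] v start_bounds in_range[of l] by auto
    have "l \<le> q" using fixed_below[of q] q v by (cases "q < l") auto
    moreover have "\<not> q \<le> m"
      using increasing[of l q] start_bounds q v \<open>l \<le> q\<close> by (cases "q = l") auto
    ultimately show "v \<in> \<pi> ` {m<..n}" using q by auto
  qed
  then have "card {l..<\<pi> l} \<le> card {m<..n}"
    by (meson card_image_le card_mono finite_greaterThanAtMost finite_imageI le_trans)
  then show ?thesis using start_less_start_value peak_less_last by simp
qed

lemma square_start_le_peak: "\<pi> (\<pi> l) \<le> m"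
proof (cases "l = m")
  case True
  then show ?thesis by (simp add: peak last_value)
next
  case False
  then have "l < m" using start_le_peak by simp
  \<comment> \<open>By \<open>square_split\<close>, no value up to \<open>\<pi> (\<pi> l)\<close> is taken by \<open>\<pi> \<circ> \<pi>\<close> on \<open>(m, n]\<close>.\<close>
  have "{l<..\<pi> (\<pi> l)} \<subseteq> (\<lambda>q. \<pi> (\<pi> q)) ` {l..<m}"
  proof
    fix v assume v: "v \<in> {l<..\<pi> (\<pi> l)}"
    have "\<pi> (\<pi> l) \<le> n" using in_range[of l] in_range[of "\<pi> l"] start_bounds by simp
    then have "1 \<le> v" "v \<le> n" using v start_bounds by auto
    then obtain q' where "1 \<le> q'" "q' \<le> n" "\<pi> q' = v" using exists_preimage by blast
    then obtain q where q: "1 \<le> q" "q \<le> n" "\<pi> (\<pi> q) = v" using exists_preimage by blast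
    have "l \<le> q" using fixed_below[of q] q v by (cases "q < l") auto
    moreover have "q \<noteq> m" using q v by (auto simp: peak last_value)
    moreover have "\<not> m < q" using square_split[of l q] \<open>l < m\<close> q v by auto
    ultimately show "v \<in> (\<lambda>q. \<pi> (\<pi> q)) ` {l..<m}" using q by (auto intro!: image_eqI[of _ _ q])
  qed
  then have "card {l<..\<pi> (\<pi> l)} \<le> card {l..<m}"
    by (meson card_image_le card_mono finite_atLeastLessThan finite_imageI le_trans)
  then show ?thesis using \<open>l < m\<close> by simp
qed

lemma start_value_lower: "n + l \<le> \<pi> l + m"
proof -
  have "\<pi> ` {\<pi> l..n} \<subseteq> {l..m}"
  proof
    fix v assume "v \<in> \<pi> ` {\<pi> l..n}"
    then obtain q where q: "\<pi> l \<le> q" "q \<le> n" "v = \<pi> q" by auto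
    have "l \<le> v" using at_least_start[of q] q start_less_start_value by simp
    moreover have "v \<le> \<pi> (\<pi> l)"
      using decreasing[of "\<pi> l" q] q peak_less_start_value by (cases "q = \<pi> l") auto
    ultimately show "v \<in> {l..m}" using square_start_le_peak by simp
  qed
  moreover have "inj_on \<pi> {\<pi> l..n}" by (simp add: inj_on_def)
  ultimately have "card {\<pi> l..n} \<le> card {l..m}"
    by (metis card_image card_mono finite_atLeastAtMost)
  then show ?thesis using in_range[of l] start_bounds start_le_peak by simp
qed

lemma start_value: "\<pi> l = n + l - m"
  using start_value_upper start_value_lower by simp

lemma on_ascent: "l \<le> q \<Longrightarrow> q \<le> m \<Longrightarrow> \<pi> q = q + n - m"
  using increasing_interval_tight[of l m \<pi> q] increasing start_bounds start_value peak
    start_le_peak peak_pos by simp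

lemma after_peak_below_start_value: "\<pi> (Suc m) < \<pi> l"
proof (rule ccontr)
  assume "\<not> \<pi> (Suc m) < \<pi> l"
  moreover have "\<pi> (Suc m) < n"
    using decreasing[of m "Suc m"] peak peak_less_last by simp
  ultimately have "l \<le> \<pi> (Suc m) + m - n" "\<pi> (Suc m) + m - n < m"
    "\<pi> (Suc m) + m - n + n - m = \<pi> (Suc m)"
    using start_value start_le_peak peak_less_last by linarith+
  then have "\<pi> (\<pi> (Suc m) + m - n) = \<pi> (Suc m)"
    using on_ascent[of "\<pi> (Suc m) + m - n"] by simp
  then show False using \<open>\<pi> (Suc m) + m - n < m\<close> by simp
qed

lemma on_descent: "m < q \<Longrightarrow> q \<le> n \<Longrightarrow> \<pi> q = l + n - q"
  using decreasing_interval_tight[of "Suc m" n \<pi> q] decreasing after_peak_below_start_value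
    start_value last_value peak_pos by simp

lemma eq_unimodal_perm: "\<pi> = unimodal_perm n (l - 1) m"
proof
  fix q
  consider "q < l" | "l \<le> q" "q \<le> m" | "m < q" "q \<le> n" | "n < q" by linarith
  then show "\<pi> q = unimodal_perm n (l - 1) m q"
    by cases (use fixed_below on_ascent on_descent fixed_outside start_bounds start_le_peak
        peak_less_last in \<open>auto simp: unimodal_perm_def\<close>)
qed

lemma unimodal_perm_parameters: "l - 1 < m" "2 * m \<le> n + (l - 1)"
  using start_bounds start_le_peak peak_less_start_value start_value by linarith+

end

lemma unimodal_perm_permutes:
  assumes "a < m" "2 * m \<le> n + a"
  shows "unimodal_perm n a m permutes {1..n}"
proof (rule inj_imp_permutes)
  show "inj_on (unimodal_perm n a m) {1..n}"
    unfolding inj_on_def unimodal_perm_def using assms by (auto split: if_splits)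
qed (use assms in \<open>auto simp: unimodal_perm_def\<close>)

lemma unimodal_perm_square:
  assumes "a < m" "2 * m \<le> n + a"
  shows "unimodal_perm n a m \<circ> unimodal_perm n a m = (\<lambda>p.
    if p \<le> a then p else if p \<le> m then a + m + 1 - p else if p + m \<le> a + n then p
    else if p \<le> n then a + 2 * n + 1 - m - p else p)"
  using assms by (auto simp: fun_eq_iff unimodal_perm_def split: if_splits)

lemma unimodal_perm_avoids_312_213:
  assumes "a < m" "2 * m \<le> n + a"
  shows "avoids (unimodal_perm n a m) n [3, 1, 2] \<and> avoids (unimodal_perm n a m) n [2, 1, 3]"
  unfolding avoids_312_213_iff using assms by (auto simp: unimodal_perm_def split: if_splits)

lemma unimodal_perm_square_avoids_312:
  assumes "a < m" "2 * m \<le> n + a"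
  shows "avoids (unimodal_perm n a m \<circ> unimodal_perm n a m) n [3, 1, 2]"
  unfolding unimodal_perm_square[OF assms] avoids_312_iff using assms by (auto split: if_splits)

lemma avoiding_perm_eq_unimodal:
  assumes perm: "\<pi> permutes {1..n}"
    and avoids: "avoids \<pi> n [3, 1, 2]" "avoids \<pi> n [2, 1, 3]" "avoids (\<pi> \<circ> \<pi>) n [3, 1, 2]"
    and "\<pi> \<noteq> id"
  shows "\<exists>a m. a < m \<and> 2 * m \<le> n + a \<and> \<pi> = unimodal_perm n a m"
proof -
  obtain p where p: "\<pi> p \<noteq> p" using \<open>\<pi> \<noteq> id\<close> by (metis eq_id_iff)
  then have "1 \<le> n" using permutes_not_in[OF perm, of p] by fastforce
  then obtain m where m: "1 \<le> m" "m \<le> n" "\<pi> m = n"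
    using permutes_image[OF perm] by (metis atLeastAtMost_iff imageE order.refl)
  define l where "l = (LEAST q. \<pi> q \<noteq> q)"
  have moved: "\<pi> l \<noteq> l" unfolding l_def using p by (rule LeastI)
  have fixed: "\<pi> q = q" if "q < l" for q
    using not_less_Least[of q "\<lambda>q. \<pi> q \<noteq> q"] that unfolding l_def by blast
  have no_valley: False
    if "1 \<le> x" "x < y" "y < z" "z \<le> n" "\<pi> y < \<pi> x" "\<pi> y < \<pi> z" for x y z
  proof -
    have "\<forall>x y z. 1 \<le> x \<longrightarrow> x < y \<longrightarrow> y < z \<longrightarrow> z \<le> n \<longrightarrow> \<not> (\<pi> y < \<pi> x \<and> \<pi> y \<le> \<pi> z)"
      using avoids(1,2) avoids_312_213_iff by blast
    then show False using that by (meson less_imp_le)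
  qed
  have square_no_312: False
    if "1 \<le> x" "x < y" "y < z" "z \<le> n" "\<pi> (\<pi> y) < \<pi> (\<pi> z)" "\<pi> (\<pi> z) < \<pi> (\<pi> x)" for x y z
    using avoids(3) that unfolding avoids_312_iff comp_def by (meson less_imp_le)
  interpret square_avoiding_perm n \<pi> m l
    by unfold_locales (fact perm m no_valley square_no_312 fixed moved)+
  show ?thesis using eq_unimodal_perm unimodal_perm_parameters by blast
qed

definition unimodal_parameters :: "nat \<Rightarrow> (nat \<times> nat) set" where
  "unimodal_parameters n = {(a, m). a < m \<and> 2 * m \<le> n + a}"

lemma avoiding_perms_eq:
  "{\<pi>. \<pi> permutes {1..n} \<and> avoids \<pi> n [3, 1, 2] \<and> avoids \<pi> n [2, 1, 3] \<and> avoids (\<pi> \<circ> \<pi>) n [3, 1, 2]}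
   = insert id ((\<lambda>(a, m). unimodal_perm n a m) ` unimodal_parameters n)" (is "?A = ?B")
proof (intro equalityI subsetI)
  fix \<pi> assume "\<pi> \<in> ?A"
  then have "\<pi> permutes {1..n}" "avoids \<pi> n [3, 1, 2]" "avoids \<pi> n [2, 1, 3]"
    "avoids (\<pi> \<circ> \<pi>) n [3, 1, 2]"
    by simp_all
  note avoiding = this
  show "\<pi> \<in> ?B"
  proof (cases "\<pi> = id")
    case False
    then obtain a m where "a < m" "2 * m \<le> n + a" "\<pi> = unimodal_perm n a m"
      using avoiding_perm_eq_unimodal[OF avoiding] by blast
    then show ?thesis
      unfolding unimodal_parameters_def by (intro insertI2 image_eqI[of _ _ "(a, m)"]) auto
  qed blast
next
  fix \<pi> assume "\<pi> \<in> ?B"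
  then consider "\<pi> = id" | a m where "a < m" "2 * m \<le> n + a" "\<pi> = unimodal_perm n a m"
    by (auto simp: unimodal_parameters_def)
  then show "\<pi> \<in> ?A"
  proof cases
    case 1
    have "avoids id n [3, 1, 2]" "avoids id n [2, 1, 3]"
      by (auto simp: avoids_def contains_length3)
    with 1 show ?thesis by (simp add: permutes_id)
  next
    case 2
    show ?thesis
      unfolding 2(3) mem_Collect_eq
      using unimodal_perm_permutes[OF 2(1,2)] unimodal_perm_avoids_312_213[OF 2(1,2)]
        unimodal_perm_square_avoids_312[OF 2(1,2)]
      by blast
  qed
qed

lemma unimodal_perm_first_moved:
  "a < m \<Longrightarrow> 2 * m \<le> n + a \<Longrightarrow> unimodal_perm n a m (Suc a) \<noteq> Suc a"
  by (simp add: unimodal_perm_def)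

lemma unimodal_perm_ne_id: "a < m \<Longrightarrow> 2 * m \<le> n + a \<Longrightarrow> unimodal_perm n a m \<noteq> id"
  using unimodal_perm_first_moved by force

lemma inj_on_unimodal_perm: "inj_on (\<lambda>(a, m). unimodal_perm n a m) (unimodal_parameters n)"
proof (rule inj_onI, clarsimp simp: unimodal_parameters_def)
  fix a m a' m'
  assume params: "a < m" "2 * m \<le> n + a" "a' < m'" "2 * m' \<le> n + a'"
    and eq: "unimodal_perm n a m = unimodal_perm n a' m'"
  have "a = a'"
  proof (cases a a' rule: linorder_cases)
    case less
    then show ?thesis
      using unimodal_perm_first_moved[of a m n] params fun_cong[OF eq, of "Suc a"]
      by (simp add: unimodal_perm_def)
  next
    case greater
    then show ?thesis
      using unimodal_perm_first_moved[of a' m' n] params fun_cong[OF eq, of "Suc a'"]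
      by (simp add: unimodal_perm_def)
  qed
  then show "a = a' \<and> m = m'"
    using eq[THEN fun_cong, of "Suc a"] params by (auto simp: unimodal_perm_def)
qed

lemma sum_diff_double_plus_one: "2 * (k::nat) \<le> n \<Longrightarrow> (\<Sum>c = 1..k. n - 2 * c + 1) = k * (n - k)"
proof (induction k)
  case (Suc k)
  then obtain d where "n = 2 * k + 2 + d" by (metis add.commute le_Suc_ex mult_Suc_right)
  with Suc show ?case by (simp add: algebra_simps)
qed simp

lemma card_unimodal_parameters: "card (unimodal_parameters n) = n div 2 * (n - n div 2)"
proof -
  have "unimodal_parameters n = (\<lambda>(c, a). (a, a + c)) ` (SIGMA c:{1..n div 2}. {0..n - 2 * c})"
  proof (intro equalityI subsetI)
    fix p assume "p \<in> unimodal_parameters n"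
    then obtain a m where "p = (a, m)" "a < m" "2 * m \<le> n + a"
      by (auto simp: unimodal_parameters_def)
    then show "p \<in> (\<lambda>(c, a). (a, a + c)) ` (SIGMA c:{1..n div 2}. {0..n - 2 * c})"
      by (intro image_eqI[of _ _ "(m - a, a)"]) auto
  qed (auto simp: unimodal_parameters_def)
  moreover have "inj_on (\<lambda>(c, a). (a, a + c)) (SIGMA c:{1..n div 2}. {0..n - 2 * c})"
    by (auto simp: inj_on_def)
  ultimately have "card (unimodal_parameters n) = (\<Sum>c = 1..n div 2. n - 2 * c + 1)"
    by (simp add: card_image card_SigmaI)
  then show ?thesis using sum_diff_double_plus_one[of "n div 2" n] by simp
qed

lemma cnt_312_213_312: "cnt n [3, 1, 2] [2, 1, 3] [3, 1, 2] = n div 2 * (n - n div 2) + 1"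
proof -
  have "finite (unimodal_parameters n)"
    by (rule finite_subset[of _ "{0..n} \<times> {0..n}"]) (auto simp: unimodal_parameters_def)
  moreover have "id \<notin> (\<lambda>(a, m). unimodal_perm n a m) ` unimodal_parameters n"
    by (clarsimp simp: unimodal_parameters_def) (metis unimodal_perm_ne_id)
  ultimately have "cnt n [3, 1, 2] [2, 1, 3] [3, 1, 2] = card (unimodal_parameters n) + 1"
    unfolding cnt_def avoiding_perms_eq by (simp add: card_image inj_on_unimodal_perm)
  then show ?thesis by (simp add: card_unimodal_parameters)
qed

theorem theorem3p3:
  fixes n :: nat
  assumes "n \<ge> 1"
  shows "cnt n [2,3,1] [1,3,2] [2,3,1] = cnt n [3,1,2] [2,1,3] [3,1,2]
       \<and> (\<forall>k. n = 2*k \<longrightarrow> cnt n [3,1,2] [2,1,3] [3,1,2] = k^2 + 1)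
       \<and> (\<forall>k. n = 2*k+1 \<longrightarrow> cnt n [3,1,2] [2,1,3] [3,1,2] = k^2 + k + 1)"
proof (intro conjI allI impI)
  show "cnt n [2,3,1] [1,3,2] [2,3,1] = cnt n [3,1,2] [2,1,3] [3,1,2]"
    by (rule cnt_231_132_eq_cnt_312_213)
next
  fix k assume "n = 2 * k"
  then show "cnt n [3,1,2] [2,1,3] [3,1,2] = k^2 + 1"
    unfolding cnt_312_213_312 by (simp add: power2_eq_square)
next
  fix k assume "n = 2 * k + 1"
  then show "cnt n [3,1,2] [2,1,3] [3,1,2] = k^2 + k + 1"
    unfolding cnt_312_213_312 by (simp add: power2_eq_square)
qed

end
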